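(* A CFM process $p$ satisfies DNI if and only if every sequential process $p_i$ in the support $\mathrm{dom}(\mathrm{dec}(p))$ satisfies DNI.
   Context: Fix a finite set of actions $Act = H \cup L \cup \{\tau\}$, where $H$ (high-level actions) and $L$ (low-level actions) are disjoint and $\tau$ is the silent action; $\mu$ ranges over $Act$, $h$ over $H$. Fix a finite set of process constants disjoint from $Act$. CFM terms: guarded $s ::= \mathbf{0} \mid \mu.q \mid s+s$; sequential $q ::= s \mid C$; parallel $p ::= q \mid p \,|\, p$. A CFM process is a term all of whose constants have a defining equation $C \doteq s$ with $s$ guarded. LTS rules: $\mu.p \xrightarrow{\mu} p$; if $p \xrightarrow{\mu} p'$ and $C \doteq p$ then $C \xrightarrow{\mu} p'$; if $p \xrightarrow{\mu} p'$ then $p+q \xrightarrow{\mu} p'$ and $q+p \xrightarrow{\mu} p'$; if $p \xrightarrow{\mu} p'$ then $p\,|\,q \xrightarrow{\mu} p'\,|\,q$ and $q\,|\,p \xrightarrow{\mu} q\,|\,p'$. Reachability is in this LTS. An FSM is $N=(S,A,T)$ with finite places $S$, finite labels $A\ni\tau$, and $T \subseteq S \times A \times (S \cup \{\theta\})$ ($\theta$ the empty multiset). Markings are finite multisets over $S$; a transition $(s,\ell,m)$ is enabled at $m_1$ if $s\in m_1$ and firing gives $m_1 \xrightarrow{\ell} (m_1\ominus s)\oplus m$. Net semantics: places are sequential CFM processes other than $\mathbf{0}$; $\mathrm{dec}(\mathbf{0})=\theta$, $\mathrm{dec}(\mu.p)=\{\mu.p\}$, $\mathrm{dec}(p+p')=\{p+p'\}$,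 $\mathrm{dec}(C)=\{C\}$, $\mathrm{dec}(p\,|\,p')=\mathrm{dec}(p)\oplus\mathrm{dec}(p')$; $\mathrm{dom}(m)$ is the set of places with nonzero multiplicity in $m$. The net $[\![p]\!]$ has initial marking $\mathrm{dec}(p)$, all places and transitions reachable from it, and transitions $(s,\mu,\mathrm{dec}(s'))$ for reachable places $s$ with $s\xrightarrow{\mu}s'$ in the LTS. The net $[\![p\setminus H]\!]$ is obtained by renaming each place $s$ as $s\setminus H$, removing transitions labelled in $H$, and taking initial marking $\mathrm{dec}(p)\setminus H$ (elementwise renaming; similarly $m\setminus H$ for any marking $m$). Branching bisimilarity $\approx$ on places of an FSM: $s\Rightarrow^\epsilon m$ is the reflexive-transitive closure of $\tau$-steps. $R\subseteq S\times S$ is a branching bisimulation if whenever $(s_1,s_2)\in R$ and $s_1\xrightarrow{\ell}m_1$: either $\ell=\tau$ and $\exists m_2$, $s_2\Rightarrow^\epsilon m_2$ with $(s_1,m_2),(m_1,m_2)\in R$; or $\exists s,m_2$ with $s_2\Rightarrow^\epsilon s\xrightarrow{\ell}m_2$, $(s_1,s)\in R$ and either $m_1=\theta=m_2$ or $(m_1,m_2)\in R$; and symmetrically. $\approx$ is the union of all branching bisimulations. The additive closure $R^\oplus$ is the least marking relation with $(\theta,\theta)\in R^\oplus$ and closed under $(s_1,s_2)\in R,(m_1,m_2)\in R^\oplus \Rightarrow (s_1\oplus m_1,s_2\oplus m_2)\in R^\oplus$. Branching team equivalence is $\approx^\oplus$; for processes, $p\approx^\oplus q$ iff $\mathrm{dec}(p)\approx^\oplus\mathrm{dec}(q)$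 in the union of their nets, and $p'\setminus H\approx^\oplus p''\setminus H$ iff $\mathrm{dec}(p')\setminus H\approx^\oplus\mathrm{dec}(p'')\setminus H$ in the union of their restricted nets. DNI: a CFM process $p$ satisfies DNI if for all $p',p''$ reachable from $p$ and $h\in H$ with $p'\xrightarrow{h}p''$, $p'\setminus H\approx^\oplus p''\setminus H$; equivalently, for all markings $m_1,m_2$ reachable from $\mathrm{dec}(p)$ in $[\![p]\!]$ and $h\in H$ with $m_1\xrightarrow{h}m_2$, $m_1\setminus H \approx^\oplus m_2\setminus H$ in $[\![p\setminus H]\!]$. *)

theory Defs
  imports Main "HOL-Library.Multiset"
begin

text \<open>Actions: the silent action Tau, or a visible action Vis a.  High-level
actions are those Vis h with h in a set H; low-level ones are the other
visible actions (so H and L are disjoint).\<close>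
datatype 'a act = Tau | Vis 'a

datatype ('a, 'c) proc =
    PNil
  | Pre "'a act" "('a, 'c) proc"
  | Sum "('a, 'c) proc" "('a, 'c) proc"
  | Cst 'c
  | Par "('a, 'c) proc" "('a, 'c) proc"

inductive guarded :: "('a, 'c) proc \<Rightarrow> bool"
  and seqp :: "('a, 'c) proc \<Rightarrow> bool" where
  g_nil: "guarded PNil"
| g_pre: "seqp q \<Longrightarrow> guarded (Pre \<mu> q)"
| g_sum: "guarded s \<Longrightarrow> guarded t \<Longrightarrow> guarded (Sum s t)"
| s_grd: "guarded s \<Longrightarrow> seqp s"
| s_cst: "seqp (Cst C)"

inductive parp :: "('a, 'c) proc \<Rightarrow> bool" where
  p_seq: "seqp q \<Longrightarrow> parp q"
| p_par: "parp p \<Longrightarrow> parp q \<Longrightarrow> parp (Par p q)"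

definition defs_ok :: "('c \<Rightarrow> ('a, 'c) proc) \<Rightarrow> bool" where
  "defs_ok \<Delta> \<longleftrightarrow> (\<forall>C. guarded (\<Delta> C))"

definition cfm :: "('c \<Rightarrow> ('a, 'c) proc) \<Rightarrow> ('a, 'c) proc \<Rightarrow> bool" where
  "cfm \<Delta> p \<longleftrightarrow> defs_ok \<Delta> \<and> parp p"

inductive step :: "('c \<Rightarrow> ('a, 'c) proc) \<Rightarrow> ('a, 'c) proc \<Rightarrow> 'a act \<Rightarrow> ('a, 'c) proc \<Rightarrow> bool"
  for \<Delta> where
  st_pre: "step \<Delta> (Pre \<mu> p) \<mu> p"
| st_cst: "step \<Delta> (\<Delta> C) \<mu> p' \<Longrightarrow> step \<Delta> (Cst C) \<mu> p'"
| st_suml: "step \<Delta> p \<mu> p' \<Longrightarrow> step \<Delta> (Sum p q) \<mu> p'"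
| st_sumr: "step \<Delta> p \<mu> p' \<Longrightarrow> step \<Delta> (Sum q p) \<mu> p'"
| st_parl: "step \<Delta> p \<mu> p' \<Longrightarrow> step \<Delta> (Par p q) \<mu> (Par p' q)"
| st_parr: "step \<Delta> p \<mu> p' \<Longrightarrow> step \<Delta> (Par q p) \<mu> (Par q p')"

definition reach :: "('c \<Rightarrow> ('a, 'c) proc) \<Rightarrow> ('a, 'c) proc \<Rightarrow> ('a, 'c) proc \<Rightarrow> bool" where
  "reach \<Delta> = (\<lambda>p q. \<exists>\<mu>. step \<Delta> p \<mu> q)\<^sup>*\<^sup>*"

fun dec :: "('a, 'c) proc \<Rightarrow> ('a, 'c) proc multiset" where
  "dec PNil = {#}"
| "dec (Pre \<mu> p) = {# Pre \<mu> p #}"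
| "dec (Sum p q) = {# Sum p q #}"
| "dec (Cst C) = {# Cst C #}"
| "dec (Par p q) = dec p + dec q"

definition places :: "('a, 'c) proc set" where
  "places = {s. seqp s \<and> s \<noteq> PNil}"

text \<open>Target of a net transition: the empty multiset (None) or one place.\<close>
definition tgt :: "('a, 'c) proc \<Rightarrow> ('a, 'c) proc option" where
  "tgt s' = (if s' = PNil then None else Some s')"

text \<open>Transitions of the restricted net [[p \ H]] (places renamed s\H
identified with s, since the renaming is a bijection): the net transitions
(s, mu, dec s') not labelled by a high action.\<close>
definition rtrans :: "('c \<Rightarrow> ('a, 'c) proc) \<Rightarrow> 'a set \<Rightarrow>
    ('a, 'c) proc \<Rightarrow> 'a act \<Rightarrow> ('a, 'c) proc option \<Rightarrow> bool" where
  "rtrans \<Delta> H s l m \<longleftrightarrow> s \<in> places \<and> (\<forall>h\<in>H. l \<noteq> Vis h) \<and>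
      (\<exists>s'. step \<Delta> s l s' \<and> m = tgt s')"

definition eps :: "('s \<Rightarrow> 'l \<Rightarrow> 's option \<Rightarrow> bool) \<Rightarrow> 'l \<Rightarrow> 's option \<Rightarrow> 's option \<Rightarrow> bool" where
  "eps T tau = (\<lambda>x y. \<exists>s. x = Some s \<and> T s tau y)\<^sup>*\<^sup>*"

definition bb_half :: "('s \<Rightarrow> 'l \<Rightarrow> 's option \<Rightarrow> bool) \<Rightarrow> 'l \<Rightarrow> ('s \<times> 's) set \<Rightarrow> bool" where
  "bb_half T tau R \<longleftrightarrow> (\<forall>(s1, s2) \<in> R. \<forall>l m1. T s1 l m1 \<longrightarrow>
     (l = tau \<and> (\<exists>m2. eps T tau (Some s2) (Some m2) \<and> (s1, m2) \<in> R \<and>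
                       (\<exists>m1'. m1 = Some m1' \<and> (m1', m2) \<in> R)))
   \<or> (\<exists>s m2. eps T tau (Some s2) (Some s) \<and> T s l m2 \<and> (s1, s) \<in> R \<and>
        ((m1 = None \<and> m2 = None) \<or> (\<exists>a b. m1 = Some a \<and> m2 = Some b \<and> (a, b) \<in> R))))"

definition bbisim :: "'s set \<Rightarrow> ('s \<Rightarrow> 'l \<Rightarrow> 's option \<Rightarrow> bool) \<Rightarrow> 'l \<Rightarrow> ('s \<times> 's) set \<Rightarrow> bool" where
  "bbisim S T tau R \<longleftrightarrow> R \<subseteq> S \<times> S \<and> bb_half T tau R \<and> bb_half T tau (R\<inverse>)"

definition bbisimilar :: "'s set \<Rightarrow> ('s \<Rightarrow> 'l \<Rightarrow> 's option \<Rightarrow> bool) \<Rightarrow> 'l \<Rightarrow> ('s \<times> 's) set" where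
  "bbisimilar S T tau = \<Union> {R. bbisim S T tau R}"

inductive_set add_closure :: "('s \<times> 's) set \<Rightarrow> ('s multiset \<times> 's multiset) set"
  for R where
  ac_empty: "({#}, {#}) \<in> add_closure R"
| ac_add: "(s1, s2) \<in> R \<Longrightarrow> (m1, m2) \<in> add_closure R \<Longrightarrow>
           (add_mset s1 m1, add_mset s2 m2) \<in> add_closure R"

definition rteam :: "('c \<Rightarrow> ('a, 'c) proc) \<Rightarrow> 'a set \<Rightarrow>
    (('a, 'c) proc multiset \<times> ('a, 'c) proc multiset) set" where
  "rteam \<Delta> H = add_closure (bbisimilar places (rtrans \<Delta> H) Tau)"

definition DNI :: "('c \<Rightarrow> ('a, 'c) proc) \<Rightarrow> 'a set \<Rightarrow> ('a, 'c) proc \<Rightarrow> bool" where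
  "DNI \<Delta> H p \<longleftrightarrow> (\<forall>p' p'' h. reach \<Delta> p p' \<longrightarrow> h \<in> H \<longrightarrow> step \<Delta> p' (Vis h) p'' \<longrightarrow>
      (dec p', dec p'') \<in> rteam \<Delta> H)"

end

theory Submission
  imports Defs
begin

(* A transition of a CFM process is a transition of a single sequential component of its
   decomposition, the other components staying idle; conversely, any computation of a component
   can be replayed inside the whole process, the other components acting as a fixed parallel
   context. Hence the high steps of the reachable states of p are exactly the steps
   M + {q'} --h--> M + dec q'' with q' --h--> q'' a high step of a state reachable from a
   component of p. Team equivalence is additive, which gives DNI of p from DNI of its components,
   and cancellative (M + A related to M + B implies A related to B), which gives the converse;
   cancellation rests on the transitivity of branching bisimilarity. *)

definition bb_answer :: "('s \<Rightarrow> 'l \<Rightarrow> 's option \<Rightarrow> bool) \<Rightarrow> 'l \<Rightarrow> ('s \<times> 's) set \<Rightarrow>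
    's \<Rightarrow> 'l \<Rightarrow> 's option \<Rightarrow> 's \<Rightarrow> bool" where
  "bb_answer T tau R s1 l m1 s2 \<longleftrightarrow>
     (l = tau \<and> (\<exists>s. eps T tau (Some s2) (Some s) \<and> (s1, s) \<in> R \<and>
                     (\<exists>m1'. m1 = Some m1' \<and> (m1', s) \<in> R)))
   \<or> (\<exists>s m2. eps T tau (Some s2) (Some s) \<and> T s l m2 \<and> (s1, s) \<in> R \<and>
        rel_option (\<lambda>a b. (a, b) \<in> R) m1 m2)"

lemma rel_option_iff_disj:
  "rel_option P x y \<longleftrightarrow> (x = None \<and> y = None) \<or> (\<exists>a b. x = Some a \<and> y = Some b \<and> P a b)"
  by (cases x; cases y) auto

lemma bb_half_iff_answer:
  "bb_half T tau R \<longleftrightarrow> (\<forall>(s1, s2) \<in> R. \<forall>l m1. T s1 l m1 \<longrightarrow> bb_answer T tau R s1 l m1 s2)"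
  unfolding bb_half_def bb_answer_def rel_option_iff_disj by simp

lemma eps_trans: "eps T tau x y \<Longrightarrow> eps T tau y z \<Longrightarrow> eps T tau x z"
  unfolding eps_def by (rule rtranclp_trans)

lemma eps_snoc: "eps T tau x (Some s) \<Longrightarrow> T s tau y \<Longrightarrow> eps T tau x y"
  unfolding eps_def by (erule rtranclp.rtrancl_into_rtrancl) blast

lemma bb_half_eps:
  assumes half: "bb_half T tau R" and "(s, t) \<in> R" and "eps T tau (Some s) (Some s')"
  shows "\<exists>t'. eps T tau (Some t) (Some t') \<and> (s', t') \<in> R"
proof -
  have "\<exists>t'. eps T tau (Some t) (Some t') \<and> (s', t') \<in> R"
    if "eps T tau (Some s) m" "m = Some s'" for m s'
    using that(1)[unfolded eps_def] that(2)
  proof (induction arbitrary: s' rule: rtranclp_induct)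
    case base
    then show ?case using \<open>(s, t) \<in> R\<close> by (auto simp: eps_def)
  next
    case (step m m')
    then obtain s0 t0 where "m = Some s0" "T s0 tau (Some s')"
      "eps T tau (Some t) (Some t0)" "(s0, t0) \<in> R" by blast
    then have "bb_answer T tau R s0 tau (Some s') t0"
      using half by (auto simp: bb_half_iff_answer)
    then show ?case
      unfolding bb_answer_def rel_option_iff_disj
      using \<open>eps T tau (Some t) (Some t0)\<close> by (blast intro: eps_trans eps_snoc)
  qed
  then show ?thesis using assms(3) by blast
qed

(* This is where the semi-branching form of the tau-clause in bb_half matters: with it,
   relational composition preserves the transfer property. *)
lemma bb_answer_relcomp:
  assumes half: "bb_half T tau S" and ans: "bb_answer T tau R s1 l m1 t" and "(t, u) \<in> S"
  shows "bb_answer T tau (R O S) s1 l m1 u"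
proof -
  from ans consider
    (silent) t' a where "l = tau" "eps T tau (Some t) (Some t')" "(s1, t') \<in> R"
      "m1 = Some a" "(a, t') \<in> R"
  | (visible) t2 m2 where "eps T tau (Some t) (Some t2)" "T t2 l m2" "(s1, t2) \<in> R"
      "rel_option (\<lambda>a b. (a, b) \<in> R) m1 m2"
    unfolding bb_answer_def by blast
  then show ?thesis
  proof cases
    case silent
    moreover obtain u' where "eps T tau (Some u) (Some u')" "(t', u') \<in> S"
      using bb_half_eps[OF half \<open>(t, u) \<in> S\<close> silent(2)] by blast
    ultimately show ?thesis unfolding bb_answer_def by blast
  next
    case visible
    obtain u2 where "eps T tau (Some u) (Some u2)" "(t2, u2) \<in> S"
      using bb_half_eps[OF half \<open>(t, u) \<in> S\<close> visible(1)] by blast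
    moreover from this have "bb_answer T tau S t2 l m2 u2"
      using half visible(2) by (auto simp: bb_half_iff_answer)
    ultimately show ?thesis
      using visible(3,4) unfolding bb_answer_def rel_option_iff_disj by (blast intro: eps_trans)
  qed
qed

lemma bb_half_relcomp:
  assumes "bb_half T tau R" "bb_half T tau S"
  shows "bb_half T tau (R O S)"
  unfolding bb_half_iff_answer[of _ _ "R O S"]
proof clarify
  fix s1 t u l m1
  assume "(s1, t) \<in> R" "(t, u) \<in> S" "T s1 l m1"
  then show "bb_answer T tau (R O S) s1 l m1 u"
    using assms by (blast intro: bb_answer_relcomp dest: bb_half_iff_answer[THEN iffD1])
qed

lemma bbisim_relcomp: "bbisim P T tau R \<Longrightarrow> bbisim P T tau S \<Longrightarrow> bbisim P T tau (R O S)"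
  unfolding bbisim_def converse_relcomp by (blast intro: bb_half_relcomp)

lemma trans_bbisimilar: "trans (bbisimilar P T tau)"
  unfolding bbisimilar_def by (rule transI) (blast intro: bbisim_relcomp)

lemma bbisim_Id_on:
  assumes "\<And>s l s'. s \<in> P \<Longrightarrow> T s l (Some s') \<Longrightarrow> s' \<in> P"
  shows "bbisim P T tau (Id_on P)"
proof -
  have "bb_half T tau (Id_on P)"
    unfolding bb_half_iff_answer bb_answer_def rel_option_iff_disj
    using assms by (fastforce simp: eps_def)
  then show ?thesis unfolding bbisim_def by auto
qed

lemma add_closure_iff_rel_mset: "(M, N) \<in> add_closure R \<longleftrightarrow> rel_mset (\<lambda>x y. (x, y) \<in> R) M N"
proof
  show "(M, N) \<in> add_closure R \<Longrightarrow> rel_mset (\<lambda>x y. (x, y) \<in> R) M N"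
    by (induction rule: add_closure.induct) (simp_all add: rel_mset_Zero rel_mset_Plus)
  show "rel_mset (\<lambda>x y. (x, y) \<in> R) M N \<Longrightarrow> (M, N) \<in> add_closure R"
    by (induction "\<lambda>x y. (x, y) \<in> R" M N rule: rel_mset_induct) (simp_all add: add_closure.intros)
qed

lemma rel_mset_plus: "rel_mset R A B \<Longrightarrow> rel_mset R C D \<Longrightarrow> rel_mset R (A + C) (B + D)"
  by (induction rule: rel_mset_induct) (auto intro: rel_mset_Plus)

lemma rel_mset_add_mset_cancel:
  assumes "transp R" and rel: "rel_mset R (add_mset x A) (add_mset x B)"
  shows "rel_mset R A B"
proof -
  obtain y N where xB_eq: "add_mset x B = add_mset y N" and "R x y" and "rel_mset R A N"
    using msed_rel_invL[OF rel] by blast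
  show ?thesis
  proof (cases "y = x")
    case True
    then show ?thesis using xB_eq \<open>rel_mset R A N\<close> by simp
  next
    case False
    then obtain S where B: "B = add_mset y S" and N: "N = add_mset x S"
      using xB_eq by (metis add_eq_conv_ex)
    obtain z A' where "A = add_mset z A'" "R z x" "rel_mset R A' S"
      using msed_rel_invR[OF \<open>rel_mset R A N\<close>[unfolded N]] by blast
    then show ?thesis
      using \<open>R x y\<close> \<open>transp R\<close> unfolding B by (blast intro: rel_mset_Plus transpD)
  qed
qed

lemma rel_mset_plus_cancel: "transp R \<Longrightarrow> rel_mset R (M + A) (M + B) \<Longrightarrow> rel_mset R A B"
  by (induction M) (auto intro: rel_mset_add_mset_cancel)

lemma seqp_step:
  assumes "defs_ok \<Delta>" "step \<Delta> s \<mu> s'" "seqp s"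
  shows "seqp s'"
  using assms(2,3)
proof (induction rule: step.induct)
  case (st_cst C \<mu> p')
  then show ?case using assms(1) by (auto simp: defs_ok_def intro: s_grd)
qed (auto elim: seqp.cases guarded.cases intro: s_grd)

lemma dec_seqp: "seqp s \<Longrightarrow> set_mset (dec s) \<subseteq> {s}"
  by (cases s) (auto elim: seqp.cases guarded.cases)
lemma dec_member_dec: "x \<in># dec p \<Longrightarrow> dec x = {#x#}"
  by (induction p) auto

lemma dec_member_neq_PNil: "x \<in># dec p \<Longrightarrow> x \<noteq> PNil"
  by (induction p) auto

lemma parp_dec_seqp: "parp p \<Longrightarrow> x \<in># dec p \<Longrightarrow> seqp x"
  by (induction arbitrary: x rule: parp.induct) (use dec_seqp in auto)

lemma step_dec_component:
  "step \<Delta> p \<mu> p' \<Longrightarrow> \<exists>q q' M. dec p = add_mset q M \<and> step \<Delta> q \<mu> q' \<and> dec p' = M + dec q'"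
proof (induction rule: step.induct)
  case (st_parl p \<mu> p' r)
  then obtain q q' M where "dec p = add_mset q M" "step \<Delta> q \<mu> q'" "dec p' = M + dec q'"
    by blast
  then have "dec (Par p r) = add_mset q (M + dec r)" "dec (Par p' r) = (M + dec r) + dec q'"
    by (simp_all add: ac_simps)
  with \<open>step \<Delta> q \<mu> q'\<close> show ?case by blast
next
  case (st_parr p \<mu> p' r)
  then obtain q q' M where "dec p = add_mset q M" "step \<Delta> q \<mu> q'" "dec p' = M + dec q'"
    by blast
  then have "dec (Par r p) = add_mset q (dec r + M)" "dec (Par r p') = (dec r + M) + dec q'"
    by (simp_all add: ac_simps)
  with \<open>step \<Delta> q \<mu> q'\<close> show ?case by blast
qed (auto intro: step.intros)

lemma reach_refl: "reach \<Delta> p p"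
  unfolding reach_def by simp

lemma reach_snoc: "reach \<Delta> p q \<Longrightarrow> step \<Delta> q \<mu> r \<Longrightarrow> reach \<Delta> p r"
  unfolding reach_def by (erule rtranclp.rtrancl_into_rtrancl) blast

lemma reach_induct [consumes 1, case_names refl snoc]:
  assumes "reach \<Delta> p p'" "P p" "\<And>q \<mu> r. reach \<Delta> p q \<Longrightarrow> step \<Delta> q \<mu> r \<Longrightarrow> P q \<Longrightarrow> P r"
  shows "P p'"
  using assms(1) unfolding reach_def
  by (induction rule: rtranclp_induct) (auto simp: reach_def intro: assms(2,3))

lemma reach_dec_component:
  assumes "defs_ok \<Delta>" "parp p" "reach \<Delta> p p'"
  shows "\<forall>x \<in># dec p'. seqp x \<and> (\<exists>q \<in># dec p. reach \<Delta> q x)"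
  using assms(3)
proof (induction rule: reach_induct)
  case refl
  show ?case using parp_dec_seqp[OF assms(2)] reach_refl by blast
next
  case (snoc p' \<mu> p'')
  then obtain \<nu> q q' M where dec_p': "dec p' = add_mset q M" and "step \<Delta> q \<nu> q'"
    and dec_p'': "dec p'' = M + dec q'"
    using step_dec_component by blast
  have "seqp q'"
    using snoc.IH seqp_step[OF assms(1) \<open>step \<Delta> q \<nu> q'\<close>] unfolding dec_p' by simp
  moreover have "\<exists>q0 \<in># dec p. reach \<Delta> q0 q'"
    using snoc.IH \<open>step \<Delta> q \<nu> q'\<close> unfolding dec_p' by (auto intro: reach_snoc)
  ultimately show ?case
    using snoc.IH dec_seqp[OF \<open>seqp q'\<close>] unfolding dec_p' dec_p'' by auto
qed

lemma dec_member_par_context: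
  assumes "q \<in># dec p"
  shows "\<exists>C M. C q = p \<and> (\<forall>r. dec (C r) = M + dec r) \<and>
           (\<forall>r \<mu> r'. step \<Delta> r \<mu> r' \<longrightarrow> step \<Delta> (C r) \<mu> (C r'))"
  using assms
proof (induction p)
  case (Par p1 p2)
  consider "q \<in># dec p1" | "q \<in># dec p2" using Par.prems by auto
  then show ?case
  proof cases
    case 1
    with Par.IH(1) obtain C M where "C q = p1" and dec_C: "\<forall>r. dec (C r) = M + dec r"
      and step_C: "\<forall>r \<mu> r'. step \<Delta> r \<mu> r' \<longrightarrow> step \<Delta> (C r) \<mu> (C r')" by blast
    have "\<forall>r. dec (Par (C r) p2) = (M + dec p2) + dec r"
      using dec_C by (simp add: ac_simps)
    moreover have "\<forall>r \<mu> r'. step \<Delta> r \<mu> r' \<longrightarrow> step \<Delta> (Par (C r) p2) \<mu> (Par (C r') p2)"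
      using step_C by (blast intro: st_parl)
    ultimately show ?thesis
      using \<open>C q = p1\<close> by (intro exI[of _ "\<lambda>r. Par (C r) p2"] exI[of _ "M + dec p2"]) simp
  next
    case 2
    with Par.IH(2) obtain C M where "C q = p2" and dec_C: "\<forall>r. dec (C r) = M + dec r"
      and step_C: "\<forall>r \<mu> r'. step \<Delta> r \<mu> r' \<longrightarrow> step \<Delta> (C r) \<mu> (C r')" by blast
    have "\<forall>r. dec (Par p1 (C r)) = (dec p1 + M) + dec r"
      using dec_C by (simp add: ac_simps)
    moreover have "\<forall>r \<mu> r'. step \<Delta> r \<mu> r' \<longrightarrow> step \<Delta> (Par p1 (C r)) \<mu> (Par p1 (C r'))"
      using step_C by (blast intro: st_parr)
    ultimately show ?thesis
      using \<open>C q = p2\<close> by (intro exI[of _ "\<lambda>r. Par p1 (C r)"] exI[of _ "dec p1 + M"]) simp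
  qed
qed (auto intro!: exI[of _ id] exI[of _ "{#}"])

lemma reach_in_context:
  assumes "\<And>r \<mu> r'. step \<Delta> r \<mu> r' \<Longrightarrow> step \<Delta> (C r) \<mu> (C r')" and "reach \<Delta> q q'"
  shows "reach \<Delta> (C q) (C q')"
  using assms(2) by (induction rule: reach_induct) (auto intro: reach_refl reach_snoc assms(1))

lemma rtrans_target_places:
  "defs_ok \<Delta> \<Longrightarrow> rtrans \<Delta> H s l (Some s') \<Longrightarrow> s' \<in> places"
  unfolding rtrans_def tgt_def places_def by (auto split: if_splits intro: seqp_step)

lemma bbisimilar_refl:
  assumes "defs_ok \<Delta>" "s \<in> places"
  shows "(s, s) \<in> bbisimilar places (rtrans \<Delta> H) Tau"
proof -
  have "bbisim places (rtrans \<Delta> H) Tau (Id_on places)"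
    by (rule bbisim_Id_on) (rule rtrans_target_places[OF assms(1)])
  then show ?thesis using assms(2) unfolding bbisimilar_def by blast
qed

lemma rteam_iff_rel_mset:
  "(M, N) \<in> rteam \<Delta> H \<longleftrightarrow> rel_mset (\<lambda>x y. (x, y) \<in> bbisimilar places (rtrans \<Delta> H) Tau) M N"
  unfolding rteam_def by (rule add_closure_iff_rel_mset)

lemma rteam_plus_left:
  assumes "defs_ok \<Delta>" "set_mset M \<subseteq> places" "(A, B) \<in> rteam \<Delta> H"
  shows "(M + A, M + B) \<in> rteam \<Delta> H"
  using assms bbisimilar_refl
  by (auto simp: rteam_iff_rel_mset intro!: rel_mset_plus multiset.rel_refl_strong)

lemma rteam_plus_cancel:
  assumes "(M + A, M + B) \<in> rteam \<Delta> H"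
  shows "(A, B) \<in> rteam \<Delta> H"
proof -
  have "transp (\<lambda>x y. (x, y) \<in> bbisimilar places (rtrans \<Delta> H) Tau)"
    unfolding transp_trans_eq by (rule trans_bbisimilar)
  then show ?thesis
    using assms unfolding rteam_iff_rel_mset by (rule rel_mset_plus_cancel)
qed

lemma DNI_dec_member:
  assumes "DNI \<Delta> H p" "q \<in># dec p"
  shows "DNI \<Delta> H q"
  unfolding DNI_def
proof (intro allI impI)
  fix q' q'' h
  assume "reach \<Delta> q q'" "h \<in> H" "step \<Delta> q' (Vis h) q''"
  obtain C M where "C q = p" and dec_C: "\<forall>r. dec (C r) = M + dec r"
    and step_C: "\<forall>r \<mu> r'. step \<Delta> r \<mu> r' \<longrightarrow> step \<Delta> (C r) \<mu> (C r')"
    using dec_member_par_context[OF assms(2)] by blast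
  have "reach \<Delta> p (C q')"
    using reach_in_context[of \<Delta> C, OF _ \<open>reach \<Delta> q q'\<close>] step_C \<open>C q = p\<close> by blast
  then have "(dec (C q'), dec (C q'')) \<in> rteam \<Delta> H"
    using assms(1) \<open>h \<in> H\<close> step_C \<open>step \<Delta> q' (Vis h) q''\<close> unfolding DNI_def by blast
  then have "(M + dec q', M + dec q'') \<in> rteam \<Delta> H"
    using dec_C by simp
  then show "(dec q', dec q'') \<in> rteam \<Delta> H"
    by (rule rteam_plus_cancel)
qed

lemma DNI_if_dec_members:
  assumes "cfm \<Delta> p" "\<forall>q \<in># dec p. DNI \<Delta> H q"
  shows "DNI \<Delta> H p"
  unfolding DNI_def
proof (intro allI impI)
  fix p' p'' h
  assume "reach \<Delta> p p'" "h \<in> H" "step \<Delta> p' (Vis h) p''"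
  have ok: "defs_ok \<Delta>" and "parp p" using assms(1) unfolding cfm_def by auto
  obtain q' q'' M where dec_p': "dec p' = add_mset q' M" and "step \<Delta> q' (Vis h) q''"
    and dec_p'': "dec p'' = M + dec q''"
    using step_dec_component[OF \<open>step \<Delta> p' (Vis h) p''\<close>] by blast
  have components: "\<forall>x \<in># dec p'. seqp x \<and> (\<exists>q \<in># dec p. reach \<Delta> q x)"
    using reach_dec_component[OF ok \<open>parp p\<close> \<open>reach \<Delta> p p'\<close>] .
  then obtain q where "q \<in># dec p" "reach \<Delta> q q'"
    unfolding dec_p' by auto
  moreover have "dec q' = {#q'#}"
    using dec_member_dec[of q' p'] unfolding dec_p' by simp
  ultimately have q'_team: "({#q'#}, dec q'') \<in> rteam \<Delta> H"
    using assms(2) \<open>h \<in> H\<close> \<open>step \<Delta> q' (Vis h) q''\<close> unfolding DNI_def by metis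
  have "set_mset M \<subseteq> places"
    using components dec_member_neq_PNil[of _ p'] unfolding dec_p' places_def by auto
  from rteam_plus_left[OF ok this q'_team]
  show "(dec p', dec p'') \<in> rteam \<Delta> H"
    unfolding dec_p' dec_p'' by simp
qed

theorem corollary4p1:
  fixes \<Delta> :: "'c::finite \<Rightarrow> ('a::finite, 'c) proc"
    and H :: "'a set"
    and p :: "('a, 'c) proc"
  assumes "cfm \<Delta> p"
  shows "DNI \<Delta> H p \<longleftrightarrow> (\<forall>q \<in> set_mset (dec p). DNI \<Delta> H q)"
  using DNI_dec_member DNI_if_dec_members[OF assms] by blast

end
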